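(* Let $G=(S,r)$ be a ranked set with $|S|=n$. Let $S(G;u,v)=\sum_{A\subseteq S}u^{r(S)-r(A)}v^{|A|-r(A)}$ be its corank-nullity generating function, and let $T(G;x,y)=S(G;x-1,y-1)$ be its Tutte polynomial. Write $T(G;x,y)=\sum_{i,j\in\mathbb{Z}} b_{i,j}x^iy^j$. Then: (1) for every integer $k$ with $0\le k<n$, $$\sum_{i=0}^{k}\sum_{j=0}^{k-i}(-1)^j\binom{k-i}{j}b_{i,j}=0;$$ (2) for $k=n$, $$\sum_{i=0}^{n}\sum_{j=0}^{n-i}(-1)^j\binom{n-i}{j}b_{i,j}=(-1)^{n-r(S)}.$$
   Context: A ranked set is a pair $G=(S,r)$ where $S$ is a finite set and $r:2^S\to\mathbb{Z}$ is a function satisfying: $r(\emptyset)=0$; $r(A)\le r(S)$ for all $A\subseteq S$; and $r(A)\le |A|$ for all $A\subseteq S$. These conditions ensure $T(G;x,y)$ is a polynomial in $x,y$. *)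

theory Defs
  imports "HOL-Computational_Algebra.Polynomial"
begin

definition ranked_set :: "'a set \<Rightarrow> ('a set \<Rightarrow> int) \<Rightarrow> bool" where
  "ranked_set S r \<longleftrightarrow> finite S \<and> r {} = 0 \<and>
     (\<forall>A. A \<subseteq> S \<longrightarrow> r A \<le> r S) \<and>
     (\<forall>A. A \<subseteq> S \<longrightarrow> r A \<le> int (card A))"

text \<open>Bivariate integer polynomials are represented as int poly poly:
  the outer variable is the second variable (v resp. y), the inner
  variable is the first one (u resp. x). The exponents r S - r A and
  |A| - r A are nonnegative for ranked sets, so nat does not truncate.\<close>
definition corank_nullity_poly :: "'a set \<Rightarrow> ('a set \<Rightarrow> int) \<Rightarrow> int poly poly" where
  "corank_nullity_poly S r =
     (\<Sum>A\<in>Pow S. [: monom 1 (nat (r S - r A)) :] * monom 1 (nat (int (card A) - r A)))"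

definition tutte_poly :: "'a set \<Rightarrow> ('a set \<Rightarrow> int) \<Rightarrow> int poly poly" where
  "tutte_poly S r =
     pcompose (map_poly (\<lambda>p. pcompose p [:-1, 1:]) (corank_nullity_poly S r)) [: [:-1:], 1 :]"

definition tutte_coeff :: "'a set \<Rightarrow> ('a set \<Rightarrow> int) \<Rightarrow> nat \<Rightarrow> nat \<Rightarrow> int" where
  "tutte_coeff S r i j = coeff (coeff (tutte_poly S r) j) i"

end

theory Submission
  imports Defs "HOL-Computational_Algebra.Polynomial_FPS"
begin

text \<open>
  Substitute x = t and y = -t/(1-t) into T and divide by 1-t. Since (-t/(1-t))^j/(1-t)
  has the coefficients (-1)^j C(m,j), the coefficient of t^k of the resulting power series
  is exactly the alternating sum of the b_{i,j} in the theorem. On the other hand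
  x - 1 = -(1-t) and y - 1 = -1/(1-t) are inverse to each other up to sign, so in
  (x-1)^(r(S)-r(A)) (y-1)^(|A|-r(A)) the rank of A cancels, and the binomial theorem
  collapses the sum over A \<subseteq> S to (-1)^(r(S)+n) t^n (1-t)^(r(S)-n-1). Its coefficients
  vanish below t^n and equal (-1)^(r(S)+n) at t^n.
\<close>

unbundle fps_syntax

locale comm_ring_hom =
  fixes h :: "'a::comm_ring_1 \<Rightarrow> 'b::comm_ring_1"
  assumes hom_add: "h (x + y) = h x + h y"
    and hom_mult: "h (x * y) = h x * h y"
    and hom_one: "h 1 = 1"
begin

lemma hom_zero: "h 0 = 0"
  using hom_add[of 0 0] by simp

lemma hom_sum: "h (sum f A) = (\<Sum>x\<in>A. h (f x))"
  by (induction A rule: infinite_finite_induct) (simp_all add: hom_zero hom_add)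

lemma hom_power: "h (x ^ n) = h x ^ n"
  by (induction n) (simp_all add: hom_one hom_mult)

lemma map_poly_add: "map_poly h (p + q) = map_poly h p + map_poly h q"
  by (intro poly_eqI) (simp add: coeff_map_poly hom_zero hom_add)

lemma map_poly_mult: "map_poly h (p * q) = map_poly h p * map_poly h q"
proof (induction p)
  case (pCons a p)
  have "map_poly h (pCons a p * q) = map_poly h (smult a q) + map_poly h (pCons 0 (p * q))"
    by (simp add: map_poly_add)
  also have "\<dots> = smult (h a) (map_poly h q) + pCons 0 (map_poly h p * map_poly h q)"
    by (simp add: map_poly_smult map_poly_pCons hom_zero hom_mult pCons.IH)
  finally show ?case
    by (simp add: map_poly_pCons hom_zero)
qed simp

lemma comm_ring_hom_map_poly: "comm_ring_hom (map_poly h)"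
  by unfold_locales (simp_all add: map_poly_add map_poly_mult hom_one)

end

lemma comm_ring_hom_comp:
  "comm_ring_hom g \<Longrightarrow> comm_ring_hom h \<Longrightarrow> comm_ring_hom (g \<circ> h)"
  by (simp add: comm_ring_hom_def)

lemma comm_ring_hom_fps_of_poly: "comm_ring_hom fps_of_poly"
  by unfold_locales (simp_all add: fps_of_poly_add fps_of_poly_mult)

lemma comm_ring_hom_pcompose: "comm_ring_hom (\<lambda>p. pcompose p q)"
  by unfold_locales (simp_all add: pcompose_add pcompose_mult pcompose_1)

lemma comm_ring_hom_poly: "comm_ring_hom (\<lambda>p. poly p x)"
  by unfold_locales simp_all

definition fps_ones :: "'a::comm_ring_1 fps" where
  "fps_ones = Abs_fps (\<lambda>_. 1)"

lemma one_minus_fps_X_mult_ones: "(1 - fps_X) * fps_ones = (1 :: 'a::comm_ring_1 fps)"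
  by (rule fps_ext) (simp add: fps_ones_def algebra_simps fps_X_mult_nth)

lemma fps_ones_power_nth:
  "(fps_ones ^ Suc j) $ m = (of_nat ((m + j) choose j) :: 'a::comm_ring_1)"
proof (induction j arbitrary: m)
  case 0
  then show ?case by (simp add: fps_ones_def)
next
  case (Suc j)
  have "(fps_ones ^ Suc (Suc j)) $ m = (\<Sum>i=0..m. (fps_ones ^ Suc j) $ (m - i) :: 'a)"
    by (simp add: fps_mult_nth fps_ones_def)
  also have "\<dots> = of_nat (\<Sum>i=0..m. (m - i + j) choose j)"
    by (simp add: Suc.IH del: power_Suc)
  also have "(\<Sum>i=0..m. (m - i + j) choose j) = (\<Sum>i\<le>m. (j + i) choose j)"
    by (rule sum.reindex_bij_witness[of _ "\<lambda>i. m - i" "\<lambda>i. m - i"]) (auto simp: add.commute)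
  also have "\<dots> = (m + Suc j) choose Suc j"
    using choose_rising_sum(1)[of j m] by (simp add: add.commute)
  finally show ?case .
qed

lemma tutte_poly_eq_sum:
  "tutte_poly S r = (\<Sum>A\<in>Pow S.
     [:[:-1, 1:] ^ nat (r S - r A):] * [:[:-1:], 1:] ^ nat (int (card A) - r A))"
proof -
  interpret shift: comm_ring_hom "\<lambda>p. pcompose p [:-1, 1 :: int:]"
    by (rule comm_ring_hom_pcompose)
  interpret shift_coeffs: comm_ring_hom "map_poly (\<lambda>p. pcompose p [:-1, 1 :: int:])"
    by (rule shift.comm_ring_hom_map_poly)
  interpret shift_outer: comm_ring_hom "\<lambda>P. pcompose P [:[:-1:], 1 :: int poly:]"
    by (rule comm_ring_hom_pcompose)
  have X_pow: "monom 1 n = [:0, 1:] ^ n" for n :: nat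
    by (simp add: monom_altdef)
  show ?thesis
    unfolding tutte_poly_def corank_nullity_poly_def X_pow shift_coeffs.hom_sum
      shift_coeffs.hom_mult shift_coeffs.hom_power shift_outer.hom_sum shift_outer.hom_mult
      shift_outer.hom_power
    by (simp add: map_poly_pCons pcompose_pCons pcompose_1 shift.hom_power)
qed

definition tutte_transform :: "'a::comm_ring_1 poly poly \<Rightarrow> 'a fps" where
  "tutte_transform P = fps_ones * poly (map_poly fps_of_poly P) (- fps_X * fps_ones)"

lemma poly_altdef_le:
  fixes x :: "'a::comm_semiring_1"
  assumes "degree p \<le> N"
  shows "poly p x = (\<Sum>i\<le>N. coeff p i * x ^ i)"
  unfolding poly_altdef
  by (rule sum.mono_neutral_left) (use assms in \<open>auto simp: coeff_eq_0\<close>)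

lemma tutte_transform_term_nth:
  fixes c :: "'a::comm_ring_1 poly"
  shows "(fps_ones * fps_of_poly c * (- fps_X * fps_ones) ^ j) $ k =
           (\<Sum>i=0..k. (-1) ^ j * of_nat ((k - i) choose j) * coeff c i)"
proof -
  have shifted: "(fps_of_poly c * fps_ones ^ Suc j) $ (k - j) =
                   (\<Sum>i=0..k. of_nat ((k - i) choose j) * coeff c i)" if "j \<le> k"
  proof -
    have "(fps_of_poly c * fps_ones ^ Suc j) $ (k - j) =
            (\<Sum>i=0..k-j. of_nat ((k - i) choose j) * coeff c i)"
      unfolding fps_mult_nth fps_of_poly_nth fps_ones_power_nth
      using that by (intro sum.cong) (auto simp: mult.commute)
    also have "\<dots> = (\<Sum>i=0..k. of_nat ((k - i) choose j) * coeff c i)"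
      by (rule sum.mono_neutral_left) (auto simp: binomial_eq_0)
    finally show ?thesis .
  qed
  have "fps_ones * fps_of_poly c * (- fps_X * fps_ones) ^ j =
          fps_const ((-1) ^ j) * (fps_X ^ j * (fps_of_poly c * fps_ones ^ Suc j))"
    by (simp add: power_mult_distrib power_minus' algebra_simps
        flip: fps_const_neg fps_const_power)
  then have "(fps_ones * fps_of_poly c * (- fps_X * fps_ones) ^ j) $ k =
               (-1) ^ j * (if k < j then 0 else (fps_of_poly c * fps_ones ^ Suc j) $ (k - j))"
    by (simp only: fps_mult_left_const_nth fps_X_power_mult_nth)
  then show ?thesis
    using shifted by (auto simp: sum_distrib_left algebra_simps binomial_eq_0 intro!: sum.neutral)
qed

lemma tutte_transform_nth:
  fixes P :: "'a::comm_ring_1 poly poly"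
  shows "tutte_transform P $ k =
           (\<Sum>i=0..k. \<Sum>j=0..k-i. (-1) ^ j * of_nat ((k - i) choose j) * coeff (coeff P j) i)"
proof -
  define N where "N = max k (degree P)"
  define t where "t i j = (-1) ^ j * of_nat ((k - i) choose j) * coeff (coeff P j) i" for i j
  have degree_le: "degree (map_poly fps_of_poly P) \<le> N"
    using map_poly_degree_leq[of fps_of_poly P] by (simp add: N_def)
  have "tutte_transform P = (\<Sum>j\<le>N. fps_ones * fps_of_poly (coeff P j) * (- fps_X * fps_ones) ^ j)"
    unfolding tutte_transform_def poly_altdef_le[OF degree_le]
    by (simp add: coeff_map_poly sum_distrib_left algebra_simps)
  then have "tutte_transform P $ k = (\<Sum>j\<le>N. \<Sum>i=0..k. t i j)"
    by (simp only: fps_sum_nth tutte_transform_term_nth t_def)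
  also have "\<dots> = (\<Sum>i=0..k. \<Sum>j\<le>N. t i j)"
    by (rule sum.swap)
  also have "\<dots> = (\<Sum>i=0..k. \<Sum>j=0..k-i. t i j)"
    by (intro sum.cong refl sum.mono_neutral_right)
      (auto simp: N_def t_def coeff_eq_0 binomial_eq_0)
  finally show ?thesis
    by (simp add: t_def)
qed

lemma power_mult_power_eq_if_mult_eq_1:
  fixes u w :: "'a::comm_monoid_mult"
  assumes uw: "u * w = 1" and exps: "a + d = c + b"
  shows "u ^ a * w ^ b = u ^ c * w ^ d"
proof -
  have "u ^ a * w ^ b = u ^ (a + d) * w ^ (b + d)"
    using uw by (simp add: power_add mult_ac flip: power_mult_distrib)
  also have "\<dots> = (u * w) ^ b * (u ^ c * w ^ d)"
    using exps by (simp add: power_add power_mult_distrib mult_ac)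
  finally show ?thesis
    using uw by simp
qed

lemma tutte_transform_tutte_poly:
  assumes "ranked_set S r"
  shows "tutte_transform (tutte_poly S r) =
           fps_const ((-1) ^ (nat (r S) + card S)) * fps_X ^ card S *
           ((1 - fps_X) ^ nat (r S) * fps_ones ^ Suc (card S))"
proof -
  define u :: "int fps" where "u = 1 - fps_X"
  define y :: "int fps" where "y = - fps_X * fps_ones"
  define R where "R = nat (r S)"
  interpret eval: comm_ring_hom "(\<lambda>P. poly P y) \<circ> map_poly fps_of_poly"
    by (intro comm_ring_hom_comp comm_ring_hom_poly comm_ring_hom.comm_ring_hom_map_poly
        comm_ring_hom_fps_of_poly)
  have u_ones: "u * fps_ones = 1"
    by (simp add: u_def one_minus_fps_X_mult_ones)
  have y_minus_1: "y - 1 = - fps_ones"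
    using u_ones by (simp add: u_def y_def algebra_simps)
  have fin: "finite S" and r_empty: "r {} = 0" and r_le: "\<And>A. A \<subseteq> S \<Longrightarrow> r A \<le> r S"
    and r_card: "\<And>A. A \<subseteq> S \<Longrightarrow> r A \<le> int (card A)"
    using assms by (auto simp: ranked_set_def)
  have balance: "(- u) ^ nat (r S - r A) * (- fps_ones) ^ nat (int (card A) - r A) =
                   (- u) ^ R * (- fps_ones) ^ card A" if "A \<subseteq> S" for A
    using r_le[OF that] r_card[OF that] r_le[of "{}"] r_empty u_ones
    by (intro power_mult_power_eq_if_mult_eq_1) (auto simp: R_def)
  have "poly (map_poly fps_of_poly (tutte_poly S r)) y =
          ((\<lambda>P. poly P y) \<circ> map_poly fps_of_poly) (tutte_poly S r)"
    by simp
  also have "\<dots> = (\<Sum>A\<in>Pow S. (- u) ^ nat (r S - r A) * (- fps_ones) ^ nat (int (card A) - r A))"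
    unfolding tutte_poly_eq_sum eval.hom_sum eval.hom_mult eval.hom_power
    using y_minus_1
    by (simp add: map_poly_pCons fps_of_poly_power fps_of_poly_pCons fps_of_poly_const
        u_def add.commute flip: fps_const_neg)
  also have "\<dots> = (- u) ^ R * (\<Sum>A\<in>Pow S. (- fps_ones) ^ card A)"
    using balance by (simp add: sum_distrib_left)
  also have "(\<Sum>A\<in>Pow S. (- fps_ones) ^ card A) = (1 - fps_ones) ^ card S"
    using prod_add[OF fin, of "\<lambda>_. - fps_ones" "\<lambda>_. 1"] by (simp add: eq_commute)
  also have "1 - fps_ones = y"
    using y_minus_1 by (simp add: algebra_simps)
  finally have "poly (map_poly fps_of_poly (tutte_poly S r)) y = (- u) ^ R * y ^ card S" .
  then have "tutte_transform (tutte_poly S r) = fps_ones * ((- u) ^ R * y ^ card S)"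
    by (simp add: tutte_transform_def y_def)
  also have "\<dots> = (-1) ^ (R + card S) * fps_X ^ card S * (u ^ R * fps_ones ^ Suc (card S))"
    by (simp add: y_def power_minus[of u] power_minus[of "fps_X * fps_ones"] power_mult_distrib
        power_add algebra_simps)
  finally show ?thesis
    by (simp add: u_def R_def flip: fps_const_power)
qed

lemma tutte_alternating_sum_eq:
  assumes "ranked_set S r"
  shows "(\<Sum>i=0..k. \<Sum>j=0..k-i. (-1::int)^j * int ((k-i) choose j) * tutte_coeff S r i j) =
           (-1) ^ (nat (r S) + card S) * (if k < card S then 0
             else ((1 - fps_X) ^ nat (r S) * fps_ones ^ Suc (card S)) $ (k - card S))"
proof -
  have "(\<Sum>i=0..k. \<Sum>j=0..k-i. (-1::int)^j * int ((k-i) choose j) * tutte_coeff S r i j) =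
          tutte_transform (tutte_poly S r) $ k"
    by (simp add: tutte_transform_nth tutte_coeff_def)
  also have "\<dots> = (-1) ^ (nat (r S) + card S) *
      (fps_X ^ card S * ((1 - fps_X) ^ nat (r S) * fps_ones ^ Suc (card S))) $ k"
    unfolding tutte_transform_tutte_poly[OF assms] by (simp only: mult.assoc fps_mult_left_const_nth)
  finally show ?thesis
    by (simp add: fps_X_power_mult_nth)
qed

theorem theorem3p1:
  fixes S :: "'a set" and r :: "'a set \<Rightarrow> int" and n :: nat
  assumes "ranked_set S r" and "card S = n"
  shows "(\<forall>k<n. (\<Sum>i=0..k. \<Sum>j=0..k-i.
            (-1::int)^j * int ((k-i) choose j) * tutte_coeff S r i j) = 0)
       \<and> (\<Sum>i=0..n. \<Sum>j=0..n-i.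
            (-1::int)^j * int ((n-i) choose j) * tutte_coeff S r i j)
         = (-1::int) ^ nat (int n - r S)"
proof -
  have "0 \<le> r S" "r S \<le> int n"
    using assms by (auto simp: ranked_set_def)
  then have parity: "nat (r S) + n = nat (int n - r S) + 2 * nat (r S)"
    by simp
  have sign: "(-1::int) ^ (nat (r S) + n) = (-1) ^ nat (int n - r S)"
    unfolding parity by (simp add: power_add power_mult)
  have "((1 - fps_X) ^ nat (r S) * fps_ones ^ Suc n) $ 0 = (1::int)"
    by (simp add: fps_ones_def fps_power_zeroth)
  then show ?thesis
    using tutte_alternating_sum_eq[OF assms(1)] sign by (simp add: assms(2))
qed

end
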